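(* Let $\mathcal{R}=(G_0,e\to R)$ be an expanding replacement system with full expansion sequence $\{G_n\}$, symbol space $\Omega$ and gluing relation $\sim$. Then: (1) each gluing vertex is represented by at least one point of $\Omega$; (2) each point of $\Omega$ represents at most one gluing vertex; (3) two distinct points of $\Omega$ are equivalent under $\sim$ if and only if they represent the same gluing vertex; (4) $\sim$ is an equivalence relation.
   Context: A graph means a finite directed multigraph (loops, multiple edges allowed). A replacement system $\mathcal{R}=(G_0,e\to R)$: $G_0$ a graph, $e$ a non-loop directed edge from $v$ to $w$, $R$ a graph containing $v,w$ (initial and terminal vertices of $R$; other vertices interior). Replacing an edge $\varepsilon$ of a graph means deleting it and gluing in a copy of $R$ with initial/terminal vertices identified with those of $\varepsilon$; new edges are $\varepsilon\zeta$ ($\zeta\in E(R)$) and new vertices $\varepsilon\nu$ ($\nu$ interior vertex of $R$). The full expansion sequence: $G_n$ is obtained from $G_{n-1}$ by replacing every edge, so $E(G_n)$ consists of words $\varepsilon_0\cdots\varepsilon_n$ ($\varepsilon_0\in E(G_0)$, $\varepsilon_i\in E(R)$) and $V(G_0)\subset V(G_1)\subset\cdots$. $\mathcal{R}$ is expanding if neither $G_0$ nor $R$ has isolated vertices, the initial and terminal vertices of $R$ are not joined by an edge, and $R$ has at least three vertices and two edges. The symbol space is $\Omega=E(G_0)\times E(R)^{\mathbb{N}}$. The gluing relation: $\varepsilon_0\varepsilon_1\cdots\sim\varepsilon_0'\varepsilon_1'\cdots$ iff for all $n$ the edges $\varepsilon_0\cdots\varepsilon_n$ and $\varepsilon_0'\cdots\varepsilon_n'$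 of $G_n$ share at least one vertex. Gluing vertices are the elements of $\bigcup_n V(G_n)$; a point $\varepsilon_0\varepsilon_1\cdots\in\Omega$ represents a gluing vertex $u$ if the edge $\varepsilon_0\cdots\varepsilon_n$ of $G_n$ is incident on $u$ for all sufficiently large $n$. *)

theory Defs
  imports "Graph_Theory.Digraph"
begin

text \<open>A graph is a finite directed multigraph: a fin_digraph (loops and multiple arcs allowed).
  Vertex iR of R plays the role of v, and tR the role of w.\<close>

definition no_isolated :: "('a,'b) pre_digraph \<Rightarrow> bool" where
  "no_isolated G \<longleftrightarrow> (\<forall>x\<in>verts G. \<exists>a\<in>arcs G. tail G a = x \<or> head G a = x)"

definition replacement_system ::
  "('v,'e) pre_digraph \<Rightarrow> 'e \<Rightarrow> ('w,'r) pre_digraph \<Rightarrow> 'w \<Rightarrow> 'w \<Rightarrow> bool" where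
  "replacement_system G0 e R iR tR \<longleftrightarrow>
     fin_digraph G0 \<and> fin_digraph R \<and> e \<in> arcs G0 \<and> tail G0 e \<noteq> head G0 e \<and>
     iR \<in> verts R \<and> tR \<in> verts R \<and> iR \<noteq> tR"

definition expanding ::
  "('v,'e) pre_digraph \<Rightarrow> 'e \<Rightarrow> ('w,'r) pre_digraph \<Rightarrow> 'w \<Rightarrow> 'w \<Rightarrow> bool" where
  "expanding G0 e R iR tR \<longleftrightarrow>
     replacement_system G0 e R iR tR \<and> no_isolated G0 \<and> no_isolated R \<and>
     \<not> (\<exists>a\<in>arcs R. (tail R a = iR \<and> head R a = tR) \<or> (tail R a = tR \<and> head R a = iR)) \<and>
     card (verts R) \<ge> 3 \<and> card (arcs R) \<ge> 2"

text \<open>Vertices of the graphs G_n: original vertices of G0, and new vertices \<open>\<epsilon>\<nu>\<close>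
  where \<open>\<epsilon> = \<epsilon>0 \<epsilon>1 ... \<epsilon>k\<close> is an edge of G_k (written New \<epsilon>0 [\<epsilon>1,...,\<epsilon>k] \<nu>)
  and \<nu> is an interior vertex of R.  An edge \<open>\<epsilon>0 \<epsilon>1 ... \<epsilon>n\<close> of G_n is written
  as the pair (\<epsilon>0, [\<epsilon>1,...,\<epsilon>n]).\<close>

datatype ('v,'e,'r,'w) gvert = Orig 'v | New 'e "'r list" 'w

text \<open>Endpoints (initial, terminal) of an edge of G_n; the list argument is reversed,
  i.e. ends_rev e0 [\<epsilon>n,...,\<epsilon>1] are the endpoints of the edge \<open>\<epsilon>0 \<epsilon>1 ... \<epsilon>n\<close>.
  Replacing the edge x by a copy of R identifies iR with the initial and tR with
  the terminal vertex of x; an interior vertex u of R becomes the new vertex x u.\<close>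

fun ends_rev :: "('v,'e) pre_digraph \<Rightarrow> ('w,'r) pre_digraph \<Rightarrow> 'w \<Rightarrow> 'w \<Rightarrow>
    'e \<Rightarrow> 'r list \<Rightarrow> ('v,'e,'r,'w) gvert \<times> ('v,'e,'r,'w) gvert" where
  "ends_rev G0 R iR tR e0 [] = (Orig (tail G0 e0), Orig (head G0 e0))"
| "ends_rev G0 R iR tR e0 (z # rs) =
    (let st = ends_rev G0 R iR tR e0 rs;
         f = (\<lambda>u. if u = iR then fst st else if u = tR then snd st else New e0 (rev rs) u)
     in (f (tail R z), f (head R z)))"

definition edge_ends :: "('v,'e) pre_digraph \<Rightarrow> ('w,'r) pre_digraph \<Rightarrow> 'w \<Rightarrow> 'w \<Rightarrow>
    'e \<times> 'r list \<Rightarrow> ('v,'e,'r,'w) gvert \<times> ('v,'e,'r,'w) gvert" where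
  "edge_ends G0 R iR tR x = ends_rev G0 R iR tR (fst x) (rev (snd x))"

definition incident :: "('v,'e) pre_digraph \<Rightarrow> ('w,'r) pre_digraph \<Rightarrow> 'w \<Rightarrow> 'w \<Rightarrow>
    'e \<times> 'r list \<Rightarrow> ('v,'e,'r,'w) gvert \<Rightarrow> bool" where
  "incident G0 R iR tR x u \<longleftrightarrow>
     u = fst (edge_ends G0 R iR tR x) \<or> u = snd (edge_ends G0 R iR tR x)"

definition expansion_verts :: "('v,'e) pre_digraph \<Rightarrow> ('w,'r) pre_digraph \<Rightarrow> 'w \<Rightarrow> 'w \<Rightarrow>
    nat \<Rightarrow> ('v,'e,'r,'w) gvert set" where
  "expansion_verts G0 R iR tR n =
     Orig ` verts G0 \<union>
     {New e0 zs u | e0 zs u. e0 \<in> arcs G0 \<and> set zs \<subseteq> arcs R \<and> length zs < n \<and>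
                             u \<in> verts R \<and> u \<noteq> iR \<and> u \<noteq> tR}"

definition expansion_arcs :: "('v,'e) pre_digraph \<Rightarrow> ('w,'r) pre_digraph \<Rightarrow> nat \<Rightarrow> ('e \<times> 'r list) set" where
  "expansion_arcs G0 R n = {(e0, zs). e0 \<in> arcs G0 \<and> set zs \<subseteq> arcs R \<and> length zs = n}"

definition gluing_vertices :: "('v,'e) pre_digraph \<Rightarrow> ('w,'r) pre_digraph \<Rightarrow> 'w \<Rightarrow> 'w \<Rightarrow>
    ('v,'e,'r,'w) gvert set" where
  "gluing_vertices G0 R iR tR = (\<Union>n. expansion_verts G0 R iR tR n)"

text \<open>Symbol space: a point \<open>\<epsilon>0 \<epsilon>1 \<epsilon>2 ...\<close> is the pair (\<epsilon>0, f) with f i = \<epsilon>(i+1).\<close>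
definition symbol_space :: "('v,'e) pre_digraph \<Rightarrow> ('w,'r) pre_digraph \<Rightarrow> ('e \<times> (nat \<Rightarrow> 'r)) set" where
  "symbol_space G0 R = {(e0, f). e0 \<in> arcs G0 \<and> (\<forall>i. f i \<in> arcs R)}"

definition prefix_edge :: "'e \<times> (nat \<Rightarrow> 'r) \<Rightarrow> nat \<Rightarrow> 'e \<times> 'r list" where
  "prefix_edge p n = (fst p, map (snd p) [0..<n])"

definition glued :: "('v,'e) pre_digraph \<Rightarrow> ('w,'r) pre_digraph \<Rightarrow> 'w \<Rightarrow> 'w \<Rightarrow>
    'e \<times> (nat \<Rightarrow> 'r) \<Rightarrow> 'e \<times> (nat \<Rightarrow> 'r) \<Rightarrow> bool" where
  "glued G0 R iR tR p q \<longleftrightarrow>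
     (\<forall>n. \<exists>u. incident G0 R iR tR (prefix_edge p n) u \<and> incident G0 R iR tR (prefix_edge q n) u)"

definition represents :: "('v,'e) pre_digraph \<Rightarrow> ('w,'r) pre_digraph \<Rightarrow> 'w \<Rightarrow> 'w \<Rightarrow>
    'e \<times> (nat \<Rightarrow> 'r) \<Rightarrow> ('v,'e,'r,'w) gvert \<Rightarrow> bool" where
  "represents G0 R iR tR p u \<longleftrightarrow>
     (\<exists>N. \<forall>n\<ge>N. incident G0 R iR tR (prefix_edge p n) u)"

end

(*
  A vertex u first appears in G_n for n = birth u, and an edge of G_m with m >= n is
  incident on u only if its ancestor in G_n is; a new vertex of G_(n+1) lying on the copy
  of R that replaces an edge of G_n is incident only on descendants of that edge.  Hence
  two points representing the same vertex are glued.  Conversely, once the prefixes of two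
  distinct glued points differ, every vertex they share in G_(n+1) is already shared in
  G_n, so the shared sets form a decreasing chain of nonempty subsets of the two endpoints
  of one edge; an element of all of them is represented by both points.  A point
  represents at most one vertex because its edge in G_(n+1) meets G_n in at most one
  vertex, the initial and terminal vertices of R not being joined by an edge.  Every
  vertex is represented: as G0 and R have no isolated vertices, some edge is incident on
  it, and every such edge can be refined to a sub-edge that is still incident on it.
  Transitivity of gluing follows from uniqueness of the represented vertex.
*)

theory Submission
  imports Defs "HOL-Library.Omega_Words_Fun"
begin

lemma decseq_nonempty_finite_Inter:
  fixes S :: "nat \<Rightarrow> 'a set"
  assumes "decseq S" and "\<And>n. S n \<noteq> {}" and "finite (S 0)"
  shows "(\<Inter>n. S n) \<noteq> {}"
proof
  assume "(\<Inter>n. S n) = {}"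
  then have "\<forall>x. \<exists>n. x \<notin> S n" by blast
  then obtain leave where leave: "\<And>x. x \<notin> S (leave x)" by metis
  define N where "N = Max (leave ` S 0)"
  have "x \<notin> S N" if "x \<in> S 0" for x
    using decseqD[OF assms(1), of "leave x" N] leave[of x] that assms(3)
    by (auto simp: N_def)
  moreover have "S N \<subseteq> S 0"
    using decseqD[OF assms(1)] by blast
  ultimately show False
    using assms(2)[of N] by blast
qed

lemma snoc_dependent_choice:
  assumes start: "P l0" and step: "\<And>l. P l \<Longrightarrow> \<exists>a\<in>A. P (l @ [a])"
  obtains f where "range f \<subseteq> A" and "\<And>n. P (l0 @ prefix n f)"
proof -
  define ext where "ext l = (SOME a. a \<in> A \<and> P (l @ [a]))" for l
  have ext: "ext l \<in> A \<and> P (l @ [ext l])" if "P l" for l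
    using someI_ex[OF step[OF that, unfolded Bex_def]] by (simp add: ext_def)
  define w where "w = rec_nat l0 (\<lambda>_ l. l @ [ext l])"
  define f where "f n = ext (w n)" for n
  have w_0: "w 0 = l0" and w_Suc: "w (Suc n) = w n @ [f n]" for n
    by (simp_all add: w_def f_def)
  have P_w: "P (w n)" for n
    by (induction n) (use start ext in \<open>simp_all add: w_0 w_Suc f_def\<close>)
  have "w n = l0 @ prefix n f" for n
    by (induction n) (simp_all add: w_0 w_Suc)
  moreover have "range f \<subseteq> A"
    using ext P_w by (auto simp: f_def)
  ultimately show thesis
    using that P_w by metis
qed

(* the index n of the first graph G_n containing u *)
definition birth :: "('v,'e,'r,'w) gvert \<Rightarrow> nat" where
  "birth u = (case u of Orig _ \<Rightarrow> 0 | New _ l _ \<Rightarrow> Suc (length l))"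

context
  fixes G0 :: "('v,'e) pre_digraph" and R :: "('w,'r) pre_digraph" and iR tR :: 'w
begin

(* the vertex of G_(length l + 1) onto which the vertex x of the copy of R replacing
   the edge (e0, l) is glued *)
definition copy_vert :: "'e \<Rightarrow> 'r list \<Rightarrow> 'w \<Rightarrow> ('v,'e,'r,'w) gvert" where
  "copy_vert e0 l x =
     (if x = iR then fst (edge_ends G0 R iR tR (e0, l))
      else if x = tR then snd (edge_ends G0 R iR tR (e0, l))
      else New e0 l x)"

definition terminals_nonadjacent :: bool where
  "terminals_nonadjacent \<longleftrightarrow>
     \<not> (\<exists>a\<in>arcs R. (tail R a = iR \<and> head R a = tR) \<or> (tail R a = tR \<and> head R a = iR))"

lemma edge_ends_Nil: "edge_ends G0 R iR tR (e0, []) = (Orig (tail G0 e0), Orig (head G0 e0))"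
  by (simp add: edge_ends_def)

lemma edge_ends_snoc:
  "edge_ends G0 R iR tR (e0, l @ [z]) = (copy_vert e0 l (tail R z), copy_vert e0 l (head R z))"
  by (simp add: edge_ends_def copy_vert_def Let_def)

lemma incident_snoc_cases:
  assumes "incident G0 R iR tR (e0, l @ [z]) u"
  obtains "incident G0 R iR tR (e0, l) u"
    | x where "u = New e0 l x" "x = tail R z \<or> x = head R z" "x \<noteq> iR" "x \<noteq> tR"
  using assms unfolding incident_def edge_ends_snoc copy_vert_def by (auto split: if_splits)

lemma birth_le_length_if_incident:
  "incident G0 R iR tR (e0, l) u \<Longrightarrow> birth u \<le> length l"
proof (induction l arbitrary: u rule: rev_induct)
  case Nil
  then show ?case by (auto simp: incident_def edge_ends_Nil birth_def)
next
  case (snoc z l)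
  from snoc.prems show ?case
    by (cases rule: incident_snoc_cases) (auto simp: birth_def dest: snoc.IH)
qed

lemma incident_take:
  "incident G0 R iR tR (e0, l) u \<Longrightarrow> birth u \<le> n \<Longrightarrow> incident G0 R iR tR (e0, take n l) u"
proof (induction l rule: rev_induct)
  case Nil
  then show ?case by simp
next
  case (snoc z l)
  show ?case
  proof (cases "length l < n")
    case True
    then show ?thesis using snoc.prems by simp
  next
    case False
    from snoc.prems(1) show ?thesis
      by (cases rule: incident_snoc_cases) (use False snoc in \<open>auto simp: birth_def\<close>)
  qed
qed

lemma incident_New:
  "incident G0 R iR tR (e0', l') (New e0 l x) \<Longrightarrow>
     e0' = e0 \<and> length l < length l' \<and> take (length l) l' = l"
proof (induction l' rule: rev_induct)
  case Nil
  then show ?case by (simp add: incident_def edge_ends_Nil)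
next
  case (snoc z l')
  from snoc.prems show ?case
    by (cases rule: incident_snoc_cases) (use snoc.IH in auto)
qed

lemma incident_in_expansion_verts:
  assumes "wf_digraph G0" "wf_digraph R" "e0 \<in> arcs G0" "set l \<subseteq> arcs R"
    and "incident G0 R iR tR (e0, l) u"
  shows "u \<in> expansion_verts G0 R iR tR (length l)"
  using assms(4,5)
proof (induction l arbitrary: u rule: rev_induct)
  case Nil
  then show ?case
    using assms(1,3)
    by (auto simp: incident_def edge_ends_Nil expansion_verts_def
        wf_digraph.tail_in_verts wf_digraph.head_in_verts)
next
  case (snoc z l)
  have "z \<in> arcs R" using snoc.prems(1) by simp
  have mono: "expansion_verts G0 R iR tR (length l) \<subseteq> expansion_verts G0 R iR tR (length (l @ [z]))"
    by (auto simp: expansion_verts_def)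
  from snoc.prems(2) show ?case
  proof (cases rule: incident_snoc_cases)
    case 1
    then show ?thesis using snoc.IH snoc.prems(1) mono by auto
  next
    case (2 x)
    have "x \<in> verts R"
      using \<open>z \<in> arcs R\<close> 2(2) assms(2)
      by (auto simp: wf_digraph.tail_in_verts wf_digraph.head_in_verts)
    then show ?thesis
      using 2 snoc.prems(1) assms(3) by (auto simp: expansion_verts_def)
  qed
qed

lemma prefix_edge_eq: "prefix_edge p n = (fst p, prefix n (snd p))"
  by (simp add: prefix_edge_def subsequence_def)

lemma common_incident_prefix_edge:
  assumes "incident G0 R iR tR (prefix_edge p m) u" "incident G0 R iR tR (prefix_edge q m) u"
    and "n \<le> m"
  shows "prefix_edge p n = prefix_edge q n
    \<or> incident G0 R iR tR (prefix_edge p n) u \<and> incident G0 R iR tR (prefix_edge q n) u"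
proof (cases "birth u \<le> n")
  case True
  then show ?thesis
    using assms incident_take[of "fst p" "prefix m (snd p)" u n]
      incident_take[of "fst q" "prefix m (snd q)" u n]
    by (simp add: prefix_edge_eq min_absorb1)
next
  case False
  then obtain e0 l x where u: "u = New e0 l x" and "n \<le> length l"
    by (cases u) (auto simp: birth_def)
  have truncation: "prefix_edge r n = (e0, take n l)"
    if "incident G0 R iR tR (prefix_edge r m) u" for r
  proof -
    have "fst r = e0" and l: "prefix (length l) (snd r) = l"
      using incident_New[of "fst r" "prefix m (snd r)" e0 l x] that u
      by (auto simp: prefix_edge_eq min_def split: if_splits)
    have "take n l = take n (prefix (length l) (snd r))"
      by (simp only: l)
    also have "\<dots> = prefix n (snd r)"
      using \<open>n \<le> length l\<close> by (simp add: min_absorb1)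
    finally show ?thesis
      by (simp add: prefix_edge_eq \<open>fst r = e0\<close>)
  qed
  show ?thesis
    using truncation[OF assms(1)] truncation[OF assms(2)] by simp
qed

lemma common_representative_imp_glued:
  assumes "represents G0 R iR tR p u" "represents G0 R iR tR q u"
  shows "glued G0 R iR tR p q"
  unfolding glued_def
proof
  fix n
  obtain N1 N2 where "\<forall>m\<ge>N1. incident G0 R iR tR (prefix_edge p m) u"
    and "\<forall>m\<ge>N2. incident G0 R iR tR (prefix_edge q m) u"
    using assms unfolding represents_def by blast
  then have "incident G0 R iR tR (prefix_edge p (max n (max N1 N2))) u"
    and "incident G0 R iR tR (prefix_edge q (max n (max N1 N2))) u"
    by simp_all
  from common_incident_prefix_edge[OF this max.cobounded1]
  show "\<exists>v. incident G0 R iR tR (prefix_edge p n) v \<and> incident G0 R iR tR (prefix_edge q n) v"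
    by (metis incident_def)
qed

lemma common_incident_snoc_eq:
  assumes "z \<in> arcs R" terminals_nonadjacent
    and "incident G0 R iR tR (e0, l) u" "incident G0 R iR tR (e0, l) u'"
    and "incident G0 R iR tR (e0, l @ [z]) u" "incident G0 R iR tR (e0, l @ [z]) u'"
  shows "u = u'"
proof -
  have old: "x = iR \<or> x = tR" if "incident G0 R iR tR (e0, l) (copy_vert e0 l x)" for x
    using birth_le_length_if_incident[OF that]
    by (auto simp: copy_vert_def birth_def split: if_splits)
  obtain x x' where "x = tail R z \<or> x = head R z" "u = copy_vert e0 l x"
    and "x' = tail R z \<or> x' = head R z" "u' = copy_vert e0 l x'"
    using assms(5,6) by (auto simp: incident_def edge_ends_snoc)
  moreover have "\<not> (tail R z = iR \<and> head R z = tR)" "\<not> (tail R z = tR \<and> head R z = iR)"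
    using assms(1,2) unfolding terminals_nonadjacent_def by auto
  ultimately show ?thesis
    using old assms(3,4) by metis
qed

lemma represents_unique:
  assumes terminals_nonadjacent and "p \<in> symbol_space G0 R"
    and "represents G0 R iR tR p u" "represents G0 R iR tR p u'"
  shows "u = u'"
proof -
  obtain N where N: "\<And>n. N \<le> n \<Longrightarrow>
      incident G0 R iR tR (prefix_edge p n) u \<and> incident G0 R iR tR (prefix_edge p n) u'"
    using assms(3,4) unfolding represents_def by (metis max.bounded_iff nle_le)
  have "snd p N \<in> arcs R"
    using assms(2) by (auto simp: symbol_space_def)
  moreover have "incident G0 R iR tR (fst p, prefix N (snd p)) u"
    "incident G0 R iR tR (fst p, prefix N (snd p)) u'"
    "incident G0 R iR tR (fst p, prefix N (snd p) @ [snd p N]) u"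
    "incident G0 R iR tR (fst p, prefix N (snd p) @ [snd p N]) u'"
    using N[of N] N[of "Suc N"] by (simp_all add: prefix_edge_eq)
  ultimately show ?thesis
    by (rule common_incident_snoc_eq[OF _ assms(1)])
qed

lemma represented_if_incident:
  assumes "no_isolated R" "iR \<in> verts R" "tR \<in> verts R" "iR \<noteq> tR"
    and "e0 \<in> arcs G0" "set l \<subseteq> arcs R" "incident G0 R iR tR (e0, l) u"
  shows "\<exists>p\<in>symbol_space G0 R. represents G0 R iR tR p u"
proof -
  have "\<exists>z\<in>arcs R. incident G0 R iR tR (e0, l' @ [z]) u"
    if inc: "incident G0 R iR tR (e0, l') u" for l'
  proof -
    have "u = copy_vert e0 l' iR \<or> u = copy_vert e0 l' tR"
      using inc assms(4) by (auto simp: incident_def copy_vert_def)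
    then obtain x where "x \<in> verts R" "u = copy_vert e0 l' x"
      using assms(2,3) by blast
    moreover obtain z where "z \<in> arcs R" "tail R z = x \<or> head R z = x"
      using assms(1) \<open>x \<in> verts R\<close> unfolding no_isolated_def by blast
    ultimately show ?thesis
      by (auto simp: incident_def edge_ends_snoc)
  qed
  then obtain f where f: "range f \<subseteq> arcs R" "\<And>n. incident G0 R iR tR (e0, l @ prefix n f) u"
    using snoc_dependent_choice[of "\<lambda>l'. incident G0 R iR tR (e0, l') u"] assms(7) by blast
  have "range (l \<frown> f) \<subseteq> arcs R"
    using assms(6) f(1) by simp
  then have "(e0, l \<frown> f) \<in> symbol_space G0 R"
    using assms(5) unfolding symbol_space_def by blast
  moreover have "represents G0 R iR tR (e0, l \<frown> f) u"
    unfolding represents_def using f(2) by (auto simp: prefix_edge_eq intro: exI[of _ "length l"])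
  ultimately show ?thesis by blast
qed

lemma gluing_vertex_represented:
  assumes "no_isolated G0" "no_isolated R" "iR \<in> verts R" "tR \<in> verts R" "iR \<noteq> tR"
    and "u \<in> gluing_vertices G0 R iR tR"
  shows "\<exists>p\<in>symbol_space G0 R. represents G0 R iR tR p u"
proof -
  from assms(6) consider (Orig) v where "u = Orig v" "v \<in> verts G0"
    | (New) e0 l x where "u = New e0 l x" "e0 \<in> arcs G0" "set l \<subseteq> arcs R"
        "x \<in> verts R" "x \<noteq> iR" "x \<noteq> tR"
    unfolding gluing_vertices_def expansion_verts_def by blast
  then show ?thesis
  proof cases
    case Orig
    then obtain a where "a \<in> arcs G0" "incident G0 R iR tR (a, []) u"
      using assms(1) by (auto simp: no_isolated_def incident_def edge_ends_Nil)
    then show ?thesis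
      using represented_if_incident[of a "[]"] assms(2-5) by simp
  next
    case New
    then obtain z where "z \<in> arcs R" "incident G0 R iR tR (e0, l @ [z]) u"
      using assms(2) by (auto simp: no_isolated_def incident_def edge_ends_snoc copy_vert_def)
    then show ?thesis
      using represented_if_incident[of e0 "l @ [z]"] New assms(2-5) by simp
  qed
qed

lemma prefix_edge_eventually_neq:
  assumes "p \<noteq> q"
  obtains K where "\<And>n. K \<le> n \<Longrightarrow> prefix_edge p n \<noteq> prefix_edge q n"
proof (cases "fst p = fst q")
  case True
  with assms obtain i where "snd p i \<noteq> snd q i"
    by (metis prod.expand ext)
  then have "prefix n (snd p) \<noteq> prefix n (snd q)" if "Suc i \<le> n" for n
    using that by (metis Suc_le_eq diff_zero subsequence_nth add_0)
  then show ?thesis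
    using that[of "Suc i"] by (simp add: prefix_edge_eq)
next
  case False
  then show ?thesis
    using that[of 0] by (simp add: prefix_edge_eq)
qed

lemma glued_imp_common_representative:
  assumes "glued G0 R iR tR p q" "p \<noteq> q"
  shows "\<exists>u. represents G0 R iR tR p u \<and> represents G0 R iR tR q u"
proof -
  obtain K where K: "\<And>n. K \<le> n \<Longrightarrow> prefix_edge p n \<noteq> prefix_edge q n"
    using prefix_edge_eventually_neq[OF assms(2)] by blast
  define S where "S n =
    {u. incident G0 R iR tR (prefix_edge p (K + n)) u \<and> incident G0 R iR tR (prefix_edge q (K + n)) u}"
    for n
  have "decseq S"
  proof (rule decseq_SucI)
    show "S (Suc n) \<subseteq> S n" for n
      using common_incident_prefix_edge[of p "Suc (K + n)" _ q "K + n"] K[of "K + n"]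
      by (auto simp: S_def)
  qed
  moreover have "S n \<noteq> {}" for n
    using assms(1) by (auto simp: S_def glued_def)
  moreover have "finite (S 0)"
    by (rule finite_subset[of _ "{fst (edge_ends G0 R iR tR (prefix_edge p K)),
                                    snd (edge_ends G0 R iR tR (prefix_edge p K))}"])
      (auto simp: S_def incident_def)
  ultimately have "(\<Inter>n. S n) \<noteq> {}"
    by (rule decseq_nonempty_finite_Inter)
  then obtain u where u: "\<And>n. u \<in> S n"
    by blast
  have "incident G0 R iR tR (prefix_edge p n) u \<and> incident G0 R iR tR (prefix_edge q n) u"
    if "K \<le> n" for n
    using u[of "n - K"] that by (simp add: S_def)
  then show ?thesis
    unfolding represents_def by blast
qed

lemma represented_in_gluing_vertices:
  assumes "wf_digraph G0" "wf_digraph R" "p \<in> symbol_space G0 R" "represents G0 R iR tR p u"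
  shows "u \<in> gluing_vertices G0 R iR tR"
proof -
  obtain N where "incident G0 R iR tR (fst p, prefix N (snd p)) u"
    using assms(4) by (auto simp: represents_def prefix_edge_eq)
  then have "u \<in> expansion_verts G0 R iR tR N"
    using incident_in_expansion_verts[OF assms(1,2), of "fst p" "prefix N (snd p)"] assms(3)
    by (auto simp: symbol_space_def image_subset_iff)
  then show ?thesis
    by (auto simp: gluing_vertices_def)
qed

lemma glued_iff_common_representative:
  assumes "wf_digraph G0" "wf_digraph R" "p \<in> symbol_space G0 R" "p \<noteq> q"
  shows "glued G0 R iR tR p q \<longleftrightarrow>
    (\<exists>u\<in>gluing_vertices G0 R iR tR. represents G0 R iR tR p u \<and> represents G0 R iR tR q u)"
  using glued_imp_common_representative[of p q] represented_in_gluing_vertices[OF assms(1-3)]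
    common_representative_imp_glued[of p _ q] assms(4)
  by blast

lemma glued_trans:
  assumes terminals_nonadjacent and "q \<in> symbol_space G0 R"
    and "glued G0 R iR tR p q" "glued G0 R iR tR q r"
  shows "glued G0 R iR tR p r"
proof (cases "p = q \<or> q = r")
  case True
  then show ?thesis using assms(3,4) by auto
next
  case False
  then obtain u u' where "represents G0 R iR tR p u" "represents G0 R iR tR q u"
    and "represents G0 R iR tR q u'" "represents G0 R iR tR r u'"
    using glued_imp_common_representative assms(3,4) by metis
  moreover from this have "u = u'"
    using represents_unique[OF assms(1,2)] by blast
  ultimately show ?thesis
    using common_representative_imp_glued by blast
qed

lemma equiv_glued:
  assumes terminals_nonadjacent
  shows "equiv (symbol_space G0 R)
    {(p, q). p \<in> symbol_space G0 R \<and> q \<in> symbol_space G0 R \<and> glued G0 R iR tR p q}"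
    (is "equiv ?\<Omega> ?glued")
proof (rule equivI)
  show "refl_on ?\<Omega> ?glued"
    by (rule refl_onI) (auto simp: glued_def incident_def)
  show "?glued \<subseteq> ?\<Omega> \<times> ?\<Omega>"
    by auto
  show "sym ?glued"
    by (rule symI) (auto simp: glued_def)
  show "trans ?glued"
    by (rule transI) (auto intro: glued_trans[OF assms])
qed

end

theorem proposition1p21:
  fixes G0 :: "('v,'e) pre_digraph" and e :: 'e
    and R :: "('w,'r) pre_digraph" and iR tR :: 'w
  assumes "expanding G0 e R iR tR"
  defines "\<Omega> \<equiv> symbol_space G0 R"
    and "GV \<equiv> gluing_vertices G0 R iR tR"
  shows "(\<forall>u\<in>GV. \<exists>p\<in>\<Omega>. represents G0 R iR tR p u)
       \<and> (\<forall>p\<in>\<Omega>. \<forall>u\<in>GV. \<forall>u'\<in>GV.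
            represents G0 R iR tR p u \<and> represents G0 R iR tR p u' \<longrightarrow> u = u')
       \<and> (\<forall>p\<in>\<Omega>. \<forall>q\<in>\<Omega>. p \<noteq> q \<longrightarrow>
            (glued G0 R iR tR p q \<longleftrightarrow>
             (\<exists>u\<in>GV. represents G0 R iR tR p u \<and> represents G0 R iR tR q u)))
       \<and> equiv \<Omega> {(p, q). p \<in> \<Omega> \<and> q \<in> \<Omega> \<and> glued G0 R iR tR p q}"
proof -
  from assms(1) have wf: "wf_digraph G0" "wf_digraph R"
    and no_isolated: "no_isolated G0" "no_isolated R"
    and ends: "iR \<in> verts R" "tR \<in> verts R" "iR \<noteq> tR"
    and nonadjacent: "terminals_nonadjacent R iR tR"
    by (auto simp: expanding_def replacement_system_def fin_digraph_def terminals_nonadjacent_def)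
  show ?thesis
    unfolding \<Omega>_def GV_def
    using gluing_vertex_represented[OF no_isolated ends] represents_unique[OF nonadjacent]
      glued_iff_common_representative[OF wf] equiv_glued[OF nonadjacent]
    by blast
qed

end
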